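(* Let $\mathcal{G}$ be a grounded graph class. Then every level-$\mathcal{G}$ weighted graph has a sorted $\mathcal{G}$-safe edge elimination scheme if and only if $\mathcal{G}$ is sandwich monotone.
   Context: All graphs are finite, simple and undirected. A ($k$-)weighted graph is a pair $(G,\omega)$ with $\omega:E(G)\to\{1,\dots,k\}$ surjective for some positive integer $k$. For $1\le i\le k+1$, the $i$-th level graph of $(G,\omega)$ is obtained from $G$ by removing all edges $e$ with $\omega(e)<i$; $(G,\omega)$ is level-$\mathcal{G}$ if all its level graphs belong to $\mathcal{G}$. For $G\in\mathcal{G}$, a set $F\subseteq E(G)$ (resp. edge $e$) is $\mathcal{G}$-safe if $G-F\in\mathcal{G}$ (resp. $G-e\in\mathcal{G}$). $\mathcal{G}$ is grounded if for every $G\in\mathcal{G}$, $E(G)$ is $\mathcal{G}$-safe. $\mathcal{G}$ is sandwich monotone if for each $G\in\mathcal{G}$ and each non-empty $\mathcal{G}$-safe set $F\subseteq E(G)$ there is a $\mathcal{G}$-safe edge in $F$. For an edge ordering $\tau=(e_1,\dots,e_m)$ of $G$ let $G^i_\tau=G-\{e_1,\dots,e_i\}$; for $G\in\mathcal{G}$, a $\mathcal{G}$-safe edge elimination scheme is an edge ordering with $G^i_\tau\in\mathcal{G}$ for all $i\in\{1,\dots,m\}$, and it is sorted (for a weighted graph $(G,\omega)$) if $i<j$ implies $\omega(e_i)\le\omega(e_j)$. *)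

theory Defs
  imports Main
begin

type_synonym 'a graph = "'a set \<times> 'a set set"

definition verts :: "'a graph \<Rightarrow> 'a set" where "verts G = fst G"
definition edges :: "'a graph \<Rightarrow> 'a set set" where "edges G = snd G"

definition is_graph :: "'a graph \<Rightarrow> bool" where
  "is_graph G \<longleftrightarrow> finite (verts G) \<and>
     (\<forall>e\<in>edges G. \<exists>u v. e = {u, v} \<and> u \<noteq> v \<and> u \<in> verts G \<and> v \<in> verts G)"

definition del_edges :: "'a graph \<Rightarrow> 'a set set \<Rightarrow> 'a graph" where
  "del_edges G F = (verts G, edges G - F)"

definition weighted_graph :: "'a graph \<Rightarrow> ('a set \<Rightarrow> nat) \<Rightarrow> nat \<Rightarrow> bool" where
  "weighted_graph G w k \<longleftrightarrow> is_graph G \<and> k \<ge> 1 \<and> w ` edges G = {1..k}"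

definition level_graph :: "'a graph \<Rightarrow> ('a set \<Rightarrow> nat) \<Rightarrow> nat \<Rightarrow> 'a graph" where
  "level_graph G w i = del_edges G {e \<in> edges G. w e < i}"

definition level_class :: "'a graph set \<Rightarrow> 'a graph \<Rightarrow> ('a set \<Rightarrow> nat) \<Rightarrow> nat \<Rightarrow> bool" where
  "level_class C G w k \<longleftrightarrow> (\<forall>i\<in>{1..k+1}. level_graph G w i \<in> C)"

definition safe_set :: "'a graph set \<Rightarrow> 'a graph \<Rightarrow> 'a set set \<Rightarrow> bool" where
  "safe_set C G F \<longleftrightarrow> F \<subseteq> edges G \<and> del_edges G F \<in> C"

definition safe_edge :: "'a graph set \<Rightarrow> 'a graph \<Rightarrow> 'a set \<Rightarrow> bool" where
  "safe_edge C G e \<longleftrightarrow> e \<in> edges G \<and> del_edges G {e} \<in> C"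

definition grounded :: "'a graph set \<Rightarrow> bool" where
  "grounded C \<longleftrightarrow> (\<forall>G\<in>C. safe_set C G (edges G))"

definition sandwich_monotone :: "'a graph set \<Rightarrow> bool" where
  "sandwich_monotone C \<longleftrightarrow>
     (\<forall>G\<in>C. \<forall>F. F \<noteq> {} \<and> safe_set C G F \<longrightarrow> (\<exists>e\<in>F. safe_edge C G e))"

definition edge_ordering :: "'a graph \<Rightarrow> 'a set list \<Rightarrow> bool" where
  "edge_ordering G \<tau> \<longleftrightarrow> distinct \<tau> \<and> set \<tau> = edges G"

definition safe_elim_scheme :: "'a graph set \<Rightarrow> 'a graph \<Rightarrow> 'a set list \<Rightarrow> bool" where
  "safe_elim_scheme C G \<tau> \<longleftrightarrow> G \<in> C \<and> edge_ordering G \<tau> \<and>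
     (\<forall>i\<in>{1..length \<tau>}. del_edges G (set (take i \<tau>)) \<in> C)"

definition sorted_for :: "('a set \<Rightarrow> nat) \<Rightarrow> 'a set list \<Rightarrow> bool" where
  "sorted_for w \<tau> \<longleftrightarrow> (\<forall>i j. i < j \<and> j < length \<tau> \<longrightarrow> w (\<tau> ! i) \<le> w (\<tau> ! j))"

end

theory Submission
  imports Defs
begin

(* If C is sandwich monotone, every safe set of a graph in C can be peeled off one safe edge
   at a time.  Deleting the weight-i edges from the i-th level graph gives the (i+1)-th, which
   lies in C, so concatenating such peelings of the weight classes 1, ..., k yields a sorted
   safe elimination scheme.  Conversely, given a nonempty safe set F of G, weight F by 1 and
   all other edges by 2: the level graphs are G, G - F and the edgeless graph (in C because C
   is grounded), and the first edge of a sorted scheme is a safe edge lying in F. *)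

lemma finite_edges: "is_graph H \<Longrightarrow> finite (edges H)"
  unfolding is_graph_def by (metis Pow_iff finite_Pow_iff finite_subset subsetI insert_subset empty_subsetI)

lemma del_edges_del_edges: "del_edges (del_edges H A) B = del_edges H (A \<union> B)"
  by (simp add: del_edges_def verts_def edges_def Diff_Un Diff_eq Int_assoc)

lemma del_edges_empty [simp]: "del_edges H {} = H"
  by (simp add: del_edges_def verts_def edges_def)

lemma edges_del_edges [simp]: "edges (del_edges H A) = edges H - A"
  by (simp add: del_edges_def edges_def)

definition safe_prefixes :: "'a graph set \<Rightarrow> 'a graph \<Rightarrow> 'a set list \<Rightarrow> bool" where
  "safe_prefixes C H \<sigma> \<longleftrightarrow> (\<forall>j\<le>length \<sigma>. del_edges H (set (take j \<sigma>)) \<in> C)"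

lemma safe_prefixes_Nil [simp]: "safe_prefixes C H [] \<longleftrightarrow> H \<in> C"
  by (simp add: safe_prefixes_def)

lemma safe_prefixes_Cons:
  "safe_prefixes C H (e # \<sigma>) \<longleftrightarrow> H \<in> C \<and> safe_prefixes C (del_edges H {e}) \<sigma>"
  unfolding safe_prefixes_def less_Suc_eq_le[symmetric]
  by (simp add: All_less_Suc2 del_edges_del_edges)

lemma safe_prefixes_imp_mem: "safe_prefixes C H \<sigma> \<Longrightarrow> H \<in> C"
  by (cases \<sigma>) (auto simp: safe_prefixes_Cons)

lemma safe_prefixes_append:
  "safe_prefixes C H (\<sigma> @ \<rho>) \<longleftrightarrow>
     safe_prefixes C H \<sigma> \<and> safe_prefixes C (del_edges H (set \<sigma>)) \<rho>"
  by (induction \<sigma> arbitrary: H)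
    (auto simp: safe_prefixes_Cons del_edges_del_edges dest: safe_prefixes_imp_mem)

lemma safe_elim_scheme_iff:
  "safe_elim_scheme C G \<tau> \<longleftrightarrow> edge_ordering G \<tau> \<and> safe_prefixes C G \<tau>"
proof -
  have "(\<forall>j\<le>length \<tau>. del_edges G (set (take j \<tau>)) \<in> C) \<longleftrightarrow>
      G \<in> C \<and> (\<forall>j\<in>{1..length \<tau>}. del_edges G (set (take j \<tau>)) \<in> C)"
    by (auto simp: Suc_le_eq)
  then show ?thesis
    unfolding safe_elim_scheme_def safe_prefixes_def by blast
qed

lemma sorted_for_iff_sorted_wrt: "sorted_for w \<tau> \<longleftrightarrow> sorted_wrt (\<lambda>a b. w a \<le> w b) \<tau>"
  unfolding sorted_for_def sorted_wrt_iff_nth_less by blast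

lemma sandwich_monotone_safe_prefixes:
  assumes sm: "sandwich_monotone C" and "finite F" "H \<in> C" "safe_set C H F"
  shows "\<exists>\<sigma>. distinct \<sigma> \<and> set \<sigma> = F \<and> safe_prefixes C H \<sigma>"
  using assms(2-4)
proof (induction F arbitrary: H rule: finite_psubset_induct)
  case (psubset F)
  show ?case
  proof (cases "F = {}")
    case True
    then show ?thesis using psubset.prems by (intro exI[of _ "[]"]) simp
  next
    case False
    then obtain e where e: "e \<in> F" "safe_edge C H e"
      using sm psubset.prems unfolding sandwich_monotone_def by blast
    let ?H' = "del_edges H {e}"
    have "?H' \<in> C" using e(2) unfolding safe_edge_def by blast
    moreover have "safe_set C ?H' (F - {e})"
      using psubset.prems(2) e(1) insert_Diff[OF e(1)]
      unfolding safe_set_def by (auto simp: del_edges_del_edges)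
    ultimately obtain \<sigma> where "distinct \<sigma>" "set \<sigma> = F - {e}" "safe_prefixes C ?H' \<sigma>"
      using psubset.IH[of "F - {e}" ?H'] e(1) by blast
    then show ?thesis
      using psubset.prems(1) e(1) by (intro exI[of _ "e # \<sigma>"]) (auto simp: safe_prefixes_Cons)
  qed
qed

lemma edges_level_graph: "edges (level_graph G w i) = {e \<in> edges G. i \<le> w e}"
  by (auto simp: level_graph_def)

lemma level_graph_Suc:
  "del_edges (level_graph G w i) {e \<in> edges (level_graph G w i). w e = i} = level_graph G w (Suc i)"
  unfolding level_graph_def del_edges_del_edges
  by (rule arg_cong[where f = "del_edges G"]) auto

lemma level_graph_1: "weighted_graph G w k \<Longrightarrow> level_graph G w 1 = G"
proof -
  assume "weighted_graph G w k"
  then have "{e \<in> edges G. w e < 1} = {}"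
    unfolding weighted_graph_def by force
  then show ?thesis unfolding level_graph_def by (metis del_edges_empty)
qed

lemma edges_level_graph_Suc_max_weight:
  "weighted_graph G w k \<Longrightarrow> edges (level_graph G w (Suc k)) = {}"
proof -
  assume "weighted_graph G w k"
  then have "w e \<le> k" if "e \<in> edges G" for e
    using that unfolding weighted_graph_def by (metis atLeastAtMost_iff imageI)
  then show ?thesis by (fastforce simp: edges_level_graph)
qed

lemma sandwich_monotone_sorted_safe_elim_scheme:
  assumes graphs: "\<forall>G\<in>C. is_graph G" and sm: "sandwich_monotone C"
    and wg: "weighted_graph G w k" and lc: "level_class C G w k"
  shows "\<exists>\<tau>. safe_elim_scheme C G \<tau> \<and> sorted_for w \<tau>"
proof -
  have "\<exists>\<sigma>. distinct \<sigma> \<and> set \<sigma> = edges (level_graph G w 1) \<and>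
      sorted_wrt (\<lambda>a b. w a \<le> w b) \<sigma> \<and> safe_prefixes C (level_graph G w 1) \<sigma>"
    using le_add2[of 1 k]
  proof (induction rule: inc_induct)
    case base
    then show ?case
      using lc edges_level_graph_Suc_max_weight[OF wg]
      unfolding level_class_def by (intro exI[of _ "[]"]) auto
  next
    case (step i)
    let ?H = "level_graph G w i" and ?H' = "level_graph G w (Suc i)"
    let ?F = "{e \<in> edges ?H. w e = i}"
    have "?H \<in> C" "?H' \<in> C" using lc step.hyps unfolding level_class_def by auto
    moreover have "finite ?F" using graphs finite_edges[of ?H] \<open>?H \<in> C\<close> by simp
    moreover have "safe_set C ?H ?F"
      unfolding safe_set_def level_graph_Suc using \<open>?H' \<in> C\<close> by blast
    ultimately obtain \<sigma> where \<sigma>: "distinct \<sigma>" "set \<sigma> = ?F" "safe_prefixes C ?H \<sigma>"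
      using sandwich_monotone_safe_prefixes[OF sm] by blast
    obtain \<rho> where \<rho>: "distinct \<rho>" "set \<rho> = edges ?H'"
        "sorted_wrt (\<lambda>a b. w a \<le> w b) \<rho>" "safe_prefixes C ?H' \<rho>"
      using step.IH by blast
    have later: "\<forall>e\<in>edges ?H'. i < w e"
      by (auto simp: edges_level_graph)
    have "\<forall>e\<in>set \<sigma>. w e = i" using \<sigma>(2) by simp
    then have \<sigma>_sorted: "sorted_wrt (\<lambda>a b. w a \<le> w b) \<sigma>" by (induction \<sigma>) auto
    have "distinct (\<sigma> @ \<rho>)"
      using \<sigma>(1,2) \<rho>(1,2) later by auto
    moreover have "set (\<sigma> @ \<rho>) = edges ?H"
      using \<sigma>(2) \<rho>(2) by (auto simp: edges_level_graph)
    moreover have "sorted_wrt (\<lambda>a b. w a \<le> w b) (\<sigma> @ \<rho>)"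
      using \<sigma>_sorted \<sigma>(2) \<rho>(2,3) later by (fastforce simp: sorted_wrt_append)
    moreover have "safe_prefixes C ?H (\<sigma> @ \<rho>)"
      using \<sigma>(2,3) \<rho>(4) by (simp add: safe_prefixes_append level_graph_Suc)
    ultimately show ?case by blast
  qed
  then show ?thesis
    using level_graph_1[OF wg]
    by (auto simp: safe_elim_scheme_iff edge_ordering_def sorted_for_iff_sorted_wrt)
qed

lemma weighted_graph_two_weights:
  assumes "is_graph G" "F \<noteq> {}" "F \<subseteq> edges G"
  shows "weighted_graph G (\<lambda>e. if e \<in> F then 1 else 2) (if F = edges G then 1 else 2)"
proof -
  let ?w = "\<lambda>e. if e \<in> F then 1 else 2 :: nat"
  have "?w ` edges G = {1} \<union> (if F = edges G then {} else {2})"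
    using assms(2,3) by auto
  also have "\<dots> = {1..if F = edges G then 1 else 2}"
    by auto
  finally show ?thesis
    using assms(1) unfolding weighted_graph_def by simp
qed

lemma level_graph_two_weights_mem:
  assumes "grounded C" "G \<in> C" "safe_set C G F"
  shows "level_graph G (\<lambda>e. if e \<in> F then 1 else 2) i \<in> C"
proof -
  have "{e \<in> edges G. (if e \<in> F then 1 else 2) < i} \<in> {{}, F, edges G}"
    using assms(3) unfolding safe_set_def by auto
  moreover have "del_edges G S \<in> C" if "S \<in> {{}, F, edges G}" for S
    using that assms unfolding grounded_def safe_set_def by auto
  ultimately show ?thesis
    unfolding level_graph_def by blast
qed

lemma sorted_safe_elim_scheme_safe_edge_le:
  assumes "safe_elim_scheme C G \<tau>" "sorted_for w \<tau>" "e \<in> edges G"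
  shows "\<exists>e'. safe_edge C G e' \<and> w e' \<le> w e"
proof -
  have "e \<in> set \<tau>" using assms(1,3) by (simp add: safe_elim_scheme_iff edge_ordering_def)
  then obtain e' \<tau>' where \<tau>: "\<tau> = e' # \<tau>'" by (cases \<tau>) auto
  have "safe_edge C G e'"
    using assms(1) safe_prefixes_imp_mem[of C "del_edges G {e'}" \<tau>']
    unfolding \<tau> safe_elim_scheme_iff edge_ordering_def safe_prefixes_Cons safe_edge_def by auto
  moreover have "w e' \<le> w e"
    using assms(2) \<open>e \<in> set \<tau>\<close> unfolding \<tau> sorted_for_iff_sorted_wrt by auto
  ultimately show ?thesis by blast
qed

theorem proposition3p1:
  fixes C :: "'a graph set"
  assumes "\<forall>G\<in>C. is_graph G"
    and "grounded C"
  shows "(\<forall>G w k. weighted_graph G w k \<and> level_class C G w k \<longrightarrow>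
            (\<exists>\<tau>. safe_elim_scheme C G \<tau> \<and> sorted_for w \<tau>))
         \<longleftrightarrow> sandwich_monotone C"
proof
  assume sorted_schemes: "\<forall>G w k. weighted_graph G w k \<and> level_class C G w k \<longrightarrow>
            (\<exists>\<tau>. safe_elim_scheme C G \<tau> \<and> sorted_for w \<tau>)"
  show "sandwich_monotone C"
    unfolding sandwich_monotone_def
  proof (intro ballI allI impI)
    fix G F assume "G \<in> C" and F: "F \<noteq> {} \<and> safe_set C G F"
    let ?w = "\<lambda>e. if e \<in> F then 1 else 2 :: nat"
    let ?k = "if F = edges G then 1 else 2 :: nat"
    have "weighted_graph G ?w ?k"
      using weighted_graph_two_weights assms(1) \<open>G \<in> C\<close> F unfolding safe_set_def by blast
    moreover have "level_class C G ?w ?k"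
      using level_graph_two_weights_mem assms(2) \<open>G \<in> C\<close> F unfolding level_class_def by blast
    ultimately obtain \<tau> where "safe_elim_scheme C G \<tau>" "sorted_for ?w \<tau>"
      using sorted_schemes by blast
    moreover obtain f where "f \<in> F" using F by blast
    ultimately obtain e where "safe_edge C G e" "?w e \<le> ?w f"
      using sorted_safe_elim_scheme_safe_edge_le F unfolding safe_set_def by blast
    then show "\<exists>e\<in>F. safe_edge C G e"
      using \<open>f \<in> F\<close> by (auto split: if_splits)
  qed
qed (use sandwich_monotone_sorted_safe_elim_scheme assms(1) in blast)

end
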